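(* Let $n \ge 2$ and let $\mathcal{B}$ be a non-degenerate deformation of the type $B_n$ Coxeter arrangement in $\mathbb{R}^n$. Let $H_0 \in \mathcal{B}$. Then the restriction $\mathcal{B}^{H_0}$, viewed in $\mathbb{R}^{n-1}$ via the isomorphism $H_0 \to \mathbb{R}^{n-1}$ that deletes one coordinate (the coordinate $x_k$ if $H_0 : x_k = a$, and the coordinate $x_l$ if $H_0 : x_k \pm x_l = a$ with $k<l$), is a non-degenerate deformation of the type $B_{n-1}$ Coxeter arrangement in $\mathbb{R}^{n-1}$.
   Context: A non-degenerate deformation of the type $B_n$ Coxeter arrangement in $\mathbb{R}^n$ is a finite hyperplane arrangement of the form $\{x_i = a_i^{(1)},\ldots,a_i^{(r_i)}\} \cup \{x_i-x_j = b_{ij}^{(1)},\ldots,b_{ij}^{(s_{ij})}\} \cup \{x_i+x_j = c_{ij}^{(1)},\ldots,c_{ij}^{(t_{ij})}\}$ (over $1\le i\le n$ resp. $1 \le i\ne j\le n$) with all constants real and $r_i,s_{ij},t_{ij} \ge 1$, i.e. every hyperplane is parallel to one of $x_i=0$, $x_i-x_j=0$, $x_i+x_j=0$, and each of these directions contains at least one hyperplane of the arrangement. For $H_0 \in \mathcal{B}$, the restriction is $\mathcal{B}^{H_0} = \{H_0 \cap H : H \in \mathcal{B}\setminus\{H_0\},\ H_0\cap H \neq \emptyset\}$, an arrangement in the affine space $H_0$. *)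

theory Defs
  imports Main "HOL-Library.Library"
begin

text \<open>Points of R^n are functions nat => real vanishing at indices >= n;
  coordinates are indexed 0..n-1 (the paper uses 1..n).\<close>

definition rspace :: "nat \<Rightarrow> (nat \<Rightarrow> real) set" where
  "rspace n = {x. \<forall>i\<ge>n. x i = 0}"

definition hyp_coord :: "nat \<Rightarrow> nat \<Rightarrow> real \<Rightarrow> (nat \<Rightarrow> real) set" where
  "hyp_coord n i a = {x \<in> rspace n. x i = a}"

definition hyp_minus :: "nat \<Rightarrow> nat \<Rightarrow> nat \<Rightarrow> real \<Rightarrow> (nat \<Rightarrow> real) set" where
  "hyp_minus n i j b = {x \<in> rspace n. x i - x j = b}"

definition hyp_plus :: "nat \<Rightarrow> nat \<Rightarrow> nat \<Rightarrow> real \<Rightarrow> (nat \<Rightarrow> real) set" where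
  "hyp_plus n i j c = {x \<in> rspace n. x i + x j = c}"

definition B_deformation :: "nat \<Rightarrow> (nat \<Rightarrow> real) set set \<Rightarrow> bool" where
  "B_deformation n \<B> \<longleftrightarrow>
     finite \<B> \<and>
     (\<forall>H\<in>\<B>. (\<exists>i a. i < n \<and> H = hyp_coord n i a)
           \<or> (\<exists>i j b. i < n \<and> j < n \<and> i \<noteq> j \<and> H = hyp_minus n i j b)
           \<or> (\<exists>i j c. i < n \<and> j < n \<and> i \<noteq> j \<and> H = hyp_plus n i j c)) \<and>
     (\<forall>i<n. \<exists>a. hyp_coord n i a \<in> \<B>) \<and>
     (\<forall>i j. i < n \<and> j < n \<and> i \<noteq> j \<longrightarrow>
        (\<exists>b. hyp_minus n i j b \<in> \<B>) \<and> (\<exists>c. hyp_plus n i j c \<in> \<B>))"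

definition restriction :: "'a set set \<Rightarrow> 'a set \<Rightarrow> 'a set set" where
  "restriction \<B> H0 = {H0 \<inter> H | H. H \<in> \<B> - {H0} \<and> H0 \<inter> H \<noteq> {}}"

definition del_coord :: "nat \<Rightarrow> (nat \<Rightarrow> real) \<Rightarrow> (nat \<Rightarrow> real)" where
  "del_coord m x = (\<lambda>i. if i < m then x i else x (Suc i))"

end

theory Submission
  imports Defs
begin

text \<open>Every hyperplane \<open>H\<^sub>0\<close> of the arrangement is the graph \<open>x\<^sub>m = g(x')\<close> of an affine
  function \<open>g\<close> of the remaining coordinates \<open>x'\<close> (a constant, \<open>x\<^sub>k - a\<close> or \<open>a - x\<^sub>k\<close>), and
  deleting \<open>x\<^sub>m\<close> identifies \<open>H\<^sub>0\<close> with \<open>\<real>\<^sup>n\<^sup>-\<^sup>1\<close>. Under this identification \<open>H\<^sub>0 \<inter> H\<close> is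
  obtained by substituting \<open>x\<^sub>m = g(x')\<close> into the equation of \<open>H\<close>. If \<open>H\<close> does not involve
  \<open>x\<^sub>m\<close> this only renumbers the coordinates; if it does, the result is again a hyperplane of
  type \<open>B\<^sub>n\<^sub>-\<^sub>1\<close> unless \<open>H\<close> is parallel to \<open>H\<^sub>0\<close>, in which case \<open>H\<^sub>0 \<inter> H\<close> is empty or
  \<open>H = H\<^sub>0\<close>. Every direction of \<open>B\<^sub>n\<^sub>-\<^sub>1\<close> is the image of the direction of \<open>B\<^sub>n\<close> on the
  same, renumbered, coordinates, so none is lost.\<close>

definition insert_coord :: "nat \<Rightarrow> real \<Rightarrow> (nat \<Rightarrow> real) \<Rightarrow> nat \<Rightarrow> real" where
  "insert_coord m v y = (\<lambda>i. if i < m then y i else if i = m then v else y (i - 1))"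

definition del_index :: "nat \<Rightarrow> nat \<Rightarrow> nat" where
  "del_index m i = (if i < m then i else i - 1)"

definition skip_index :: "nat \<Rightarrow> nat \<Rightarrow> nat" where
  "skip_index m j = (if j < m then j else Suc j)"

lemma insert_coord_at [simp]: "insert_coord m v y m = v"
  by (simp add: insert_coord_def)

lemma insert_coord_other: "i \<noteq> m \<Longrightarrow> insert_coord m v y i = y (del_index m i)"
  by (simp add: insert_coord_def del_index_def)

lemma insert_coord_below [simp]: "k < m \<Longrightarrow> insert_coord m v y k = y k"
  by (simp add: insert_coord_def)

lemma del_coord_insert_coord [simp]: "del_coord m (insert_coord m v y) = y"
  by (auto simp: insert_coord_def del_coord_def)

lemma insert_coord_del_coord: "insert_coord m (x m) (del_coord m x) = x"
  by (rule ext) (auto simp: insert_coord_def del_coord_def)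

lemma insert_coord_rspace: "m < n \<Longrightarrow> y \<in> rspace (n - 1) \<Longrightarrow> insert_coord m v y \<in> rspace n"
  by (auto simp: insert_coord_def rspace_def)

lemma del_coord_rspace: "m < n \<Longrightarrow> x \<in> rspace n \<Longrightarrow> del_coord m x \<in> rspace (n - 1)"
  by (auto simp: del_coord_def rspace_def)

lemma del_index_less: "m < n \<Longrightarrow> i < n \<Longrightarrow> i \<noteq> m \<Longrightarrow> del_index m i < n - 1"
  by (auto simp: del_index_def)

lemma del_index_inj: "i \<noteq> m \<Longrightarrow> j \<noteq> m \<Longrightarrow> i \<noteq> j \<Longrightarrow> del_index m i \<noteq> del_index m j"
  by (auto simp: del_index_def)

lemma del_index_neq_below: "k < m \<Longrightarrow> i \<noteq> m \<Longrightarrow> i \<noteq> k \<Longrightarrow> del_index m i \<noteq> k"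
  by (auto simp: del_index_def)

lemma skip_index_less: "m < n \<Longrightarrow> j < n - 1 \<Longrightarrow> skip_index m j < n"
  by (auto simp: skip_index_def)

lemma skip_index_neq: "skip_index m j \<noteq> m"
  by (simp add: skip_index_def)

lemma del_index_skip_index [simp]: "del_index m (skip_index m j) = j"
  by (simp add: del_index_def skip_index_def)

lemma skip_index_inj: "i \<noteq> j \<Longrightarrow> skip_index m i \<noteq> skip_index m j"
  by (auto simp: skip_index_def)

definition B_hyperplane :: "nat \<Rightarrow> (nat \<Rightarrow> real) set \<Rightarrow> bool" where
  "B_hyperplane n H \<longleftrightarrow> (\<exists>i a. i < n \<and> H = hyp_coord n i a)
     \<or> (\<exists>i j b. i < n \<and> j < n \<and> i \<noteq> j \<and> H = hyp_minus n i j b)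
     \<or> (\<exists>i j c. i < n \<and> j < n \<and> i \<noteq> j \<and> H = hyp_plus n i j c)"

lemma B_hyperplane_coord: "i < n \<Longrightarrow> B_hyperplane n (hyp_coord n i a)"
  unfolding B_hyperplane_def by blast

lemma B_hyperplane_minus: "i < n \<Longrightarrow> j < n \<Longrightarrow> i \<noteq> j \<Longrightarrow> B_hyperplane n (hyp_minus n i j b)"
  unfolding B_hyperplane_def by blast

lemma B_hyperplane_plus: "i < n \<Longrightarrow> j < n \<Longrightarrow> i \<noteq> j \<Longrightarrow> B_hyperplane n (hyp_plus n i j c)"
  unfolding B_hyperplane_def by blast

lemma B_deformation_iff:
  "B_deformation n \<B> \<longleftrightarrow> finite \<B> \<and> (\<forall>H\<in>\<B>. B_hyperplane n H) \<and>
     (\<forall>i<n. \<exists>a. hyp_coord n i a \<in> \<B>) \<and>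
     (\<forall>i j. i < n \<and> j < n \<and> i \<noteq> j \<longrightarrow>
        (\<exists>b. hyp_minus n i j b \<in> \<B>) \<and> (\<exists>c. hyp_plus n i j c \<in> \<B>))"
  unfolding B_deformation_def B_hyperplane_def ..

lemma hyp_minus_swap: "hyp_minus n i j b = hyp_minus n j i (- b)"
  by (auto simp: hyp_minus_def)

lemma hyp_plus_swap: "hyp_plus n i j c = hyp_plus n j i c"
  by (auto simp: hyp_plus_def)

lemma B_hyperplane_proper:
  assumes "B_hyperplane n H"
  shows "H \<noteq> {}" and "H \<noteq> rspace n"
proof -
  define e where "e i t = (\<lambda>s. if s = i then t else 0 :: real)" for i :: nat and t
  have e_rspace: "e i t \<in> rspace n" if "i < n" for i :: nat and t
    using that by (simp add: e_def rspace_def)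
  obtain i c where "i < n" and axis: "\<And>t. e i t \<in> H \<longleftrightarrow> t = c"
    using assms unfolding B_hyperplane_def
    by (auto simp: hyp_coord_def hyp_minus_def hyp_plus_def e_rspace) (auto simp: e_def)
  show "H \<noteq> {}" using axis by blast
  show "H \<noteq> rspace n" using axis[of "c + 1"] e_rspace[OF \<open>i < n\<close>] by auto
qed

definition graph_hyp :: "nat \<Rightarrow> nat \<Rightarrow> ((nat \<Rightarrow> real) \<Rightarrow> real) \<Rightarrow> (nat \<Rightarrow> real) set" where
  "graph_hyp n m g = {x \<in> rspace n. x m = g (del_coord m x)}"

definition graph_pullback ::
    "nat \<Rightarrow> nat \<Rightarrow> ((nat \<Rightarrow> real) \<Rightarrow> real) \<Rightarrow> (nat \<Rightarrow> real) set \<Rightarrow> (nat \<Rightarrow> real) set" where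
  "graph_pullback n m g H = {y \<in> rspace (n - 1). insert_coord m (g y) y \<in> H}"

lemma del_coord_image_graph_hyp_Int:
  assumes "m < n"
  shows "del_coord m ` (graph_hyp n m g \<inter> H) = graph_pullback n m g H"
proof (intro equalityI subsetI)
  fix y assume "y \<in> del_coord m ` (graph_hyp n m g \<inter> H)"
  then obtain x where x: "x \<in> rspace n" "x m = g y" "x \<in> H" and y: "y = del_coord m x"
    by (auto simp: graph_hyp_def)
  have "insert_coord m (g y) y = x"
    using insert_coord_del_coord[of m x] by (simp add: x(2) flip: y)
  then show "y \<in> graph_pullback n m g H"
    using x y del_coord_rspace[OF assms] by (auto simp: graph_pullback_def)
next
  fix y assume "y \<in> graph_pullback n m g H"
  then have "insert_coord m (g y) y \<in> graph_hyp n m g \<inter> H"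
    using insert_coord_rspace[OF assms] by (simp add: graph_pullback_def graph_hyp_def)
  then show "y \<in> del_coord m ` (graph_hyp n m g \<inter> H)"
    by (rule rev_image_eqI) simp
qed

lemma graph_pullback_graph_hyp: "m < n \<Longrightarrow> graph_pullback n m g (graph_hyp n m g) = rspace (n - 1)"
  by (auto simp: graph_pullback_def graph_hyp_def insert_coord_rspace)

lemma graph_pullback_hyp_coord:
  "m < n \<Longrightarrow> i \<noteq> m \<Longrightarrow> graph_pullback n m g (hyp_coord n i c) = hyp_coord (n - 1) (del_index m i) c"
  by (auto simp: graph_pullback_def hyp_coord_def insert_coord_other insert_coord_rspace)

lemma graph_pullback_hyp_minus:
  "m < n \<Longrightarrow> i \<noteq> m \<Longrightarrow> j \<noteq> m \<Longrightarrow>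
    graph_pullback n m g (hyp_minus n i j b) = hyp_minus (n - 1) (del_index m i) (del_index m j) b"
  by (auto simp: graph_pullback_def hyp_minus_def insert_coord_other insert_coord_rspace)

lemma graph_pullback_hyp_plus:
  "m < n \<Longrightarrow> i \<noteq> m \<Longrightarrow> j \<noteq> m \<Longrightarrow>
    graph_pullback n m g (hyp_plus n i j c) = hyp_plus (n - 1) (del_index m i) (del_index m j) c"
  by (auto simp: graph_pullback_def hyp_plus_def insert_coord_other insert_coord_rspace)

lemma B_hyperplane_graph_pullback_cases:
  assumes "B_hyperplane n H" and "m < n"
  obtains (avoiding) "B_hyperplane (n - 1) (graph_pullback n m g H)"
  | (coord) c where "H = hyp_coord n m c"
  | (minus) i b where "i < n" "i \<noteq> m" "H = hyp_minus n i m b"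
  | (plus) i c where "i < n" "i \<noteq> m" "H = hyp_plus n i m c"
  using assms(1) unfolding B_hyperplane_def
proof (elim disjE exE conjE)
  fix i c assume "i < n" "H = hyp_coord n i c"
  then show thesis
    using that(1,2) graph_pullback_hyp_coord[OF \<open>m < n\<close>] del_index_less[OF \<open>m < n\<close>]
    by (metis B_hyperplane_coord)
next
  fix i j b assume ij: "i < n" "j < n" "i \<noteq> j" and H: "H = hyp_minus n i j b"
  consider "j = m" | "i = m" | "i \<noteq> m" "j \<noteq> m" by blast
  then show thesis
  proof cases
    case 2
    then show thesis using that(3) ij H hyp_minus_swap by metis
  qed (use that(1,3) ij H graph_pullback_hyp_minus[OF \<open>m < n\<close>] del_index_less[OF \<open>m < n\<close>]
        del_index_inj B_hyperplane_minus in metis)+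
next
  fix i j c assume ij: "i < n" "j < n" "i \<noteq> j" and H: "H = hyp_plus n i j c"
  consider "j = m" | "i = m" | "i \<noteq> m" "j \<noteq> m" by blast
  then show thesis
  proof cases
    case 2
    then show thesis using that(4) ij H hyp_plus_swap by metis
  qed (use that(1,4) ij H graph_pullback_hyp_plus[OF \<open>m < n\<close>] del_index_less[OF \<open>m < n\<close>]
        del_index_inj B_hyperplane_plus in metis)+
qed

lemma del_coord_image_restriction_graph_hyp:
  assumes "m < n"
  shows "(`) (del_coord m) ` restriction \<B> (graph_hyp n m g) =
    {graph_pullback n m g H | H. H \<in> \<B> - {graph_hyp n m g} \<and> graph_pullback n m g H \<noteq> {}}"
proof -
  have "restriction \<B> (graph_hyp n m g) =
      (\<lambda>H. graph_hyp n m g \<inter> H) ` {H \<in> \<B> - {graph_hyp n m g}. graph_hyp n m g \<inter> H \<noteq> {}}"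
    by (auto simp: restriction_def)
  then show ?thesis
    by (auto simp: image_image del_coord_image_graph_hyp_Int[OF assms, symmetric])
qed

lemma restriction_graph_hyp_B_deformation:
  assumes B: "B_deformation n \<B>" and "m < n"
    and coord: "\<And>c. hyp_coord n m c \<noteq> graph_hyp n m g \<Longrightarrow>
        graph_pullback n m g (hyp_coord n m c) \<noteq> {} \<Longrightarrow>
        B_hyperplane (n - 1) (graph_pullback n m g (hyp_coord n m c))"
    and minus: "\<And>i b. i < n \<Longrightarrow> i \<noteq> m \<Longrightarrow> hyp_minus n i m b \<noteq> graph_hyp n m g \<Longrightarrow>
        graph_pullback n m g (hyp_minus n i m b) \<noteq> {} \<Longrightarrow>
        B_hyperplane (n - 1) (graph_pullback n m g (hyp_minus n i m b))"
    and plus: "\<And>i c. i < n \<Longrightarrow> i \<noteq> m \<Longrightarrow> hyp_plus n i m c \<noteq> graph_hyp n m g \<Longrightarrow>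
        graph_pullback n m g (hyp_plus n i m c) \<noteq> {} \<Longrightarrow>
        B_hyperplane (n - 1) (graph_pullback n m g (hyp_plus n i m c))"
  shows "B_deformation (n - 1) ((`) (del_coord m) ` restriction \<B> (graph_hyp n m g))"
proof -
  let ?H0 = "graph_hyp n m g" and ?pb = "graph_pullback n m g"
  define R where "R = {?pb H | H. H \<in> \<B> - {?H0} \<and> ?pb H \<noteq> {}}"
  have fin: "finite \<B>" and hyps: "\<And>H. H \<in> \<B> \<Longrightarrow> B_hyperplane n H"
    and has_coord: "\<And>i. i < n \<Longrightarrow> \<exists>a. hyp_coord n i a \<in> \<B>"
    and has_minus_plus: "\<And>i j. i < n \<Longrightarrow> j < n \<Longrightarrow> i \<noteq> j \<Longrightarrow>
      (\<exists>b. hyp_minus n i j b \<in> \<B>) \<and> (\<exists>c. hyp_plus n i j c \<in> \<B>)"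
    using B unfolding B_deformation_iff by blast+
  have "finite R"
    using fin by (simp add: R_def Setcompr_eq_image)
  moreover have "\<forall>S\<in>R. B_hyperplane (n - 1) S"
  proof
    fix S assume "S \<in> R"
    then obtain H where H: "H \<in> \<B>" "H \<noteq> ?H0" "?pb H \<noteq> {}" and S: "S = ?pb H"
      unfolding R_def by blast
    from hyps[OF H(1)] \<open>m < n\<close> show "B_hyperplane (n - 1) S"
      unfolding S by (cases rule: B_hyperplane_graph_pullback_cases) (use coord minus plus H in auto)
  qed
  moreover have pullback_mem: "S \<in> R" if "H \<in> \<B>" "?pb H = S" "B_hyperplane (n - 1) S" for H S
    using that B_hyperplane_proper[OF that(3)] graph_pullback_graph_hyp[OF \<open>m < n\<close>]
    unfolding R_def by blast
  moreover have "\<forall>j<n - 1. \<exists>a. hyp_coord (n - 1) j a \<in> R"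
  proof (intro allI impI)
    fix j assume j: "j < n - 1"
    obtain a where a: "hyp_coord n (skip_index m j) a \<in> \<B>"
      using has_coord[OF skip_index_less[OF \<open>m < n\<close> j]] by blast
    have "?pb (hyp_coord n (skip_index m j) a) = hyp_coord (n - 1) j a"
      using graph_pullback_hyp_coord[OF \<open>m < n\<close> skip_index_neq[of m j]] by simp
    from pullback_mem[OF a this B_hyperplane_coord[OF j]] show "\<exists>a. hyp_coord (n - 1) j a \<in> R" ..
  qed
  moreover have "\<forall>i j. i < n - 1 \<and> j < n - 1 \<and> i \<noteq> j \<longrightarrow>
      (\<exists>b. hyp_minus (n - 1) i j b \<in> R) \<and> (\<exists>c. hyp_plus (n - 1) i j c \<in> R)"
  proof (intro allI impI, elim conjE)
    fix i j assume ij: "i < n - 1" "j < n - 1" "i \<noteq> j"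
    obtain b c where b: "hyp_minus n (skip_index m i) (skip_index m j) b \<in> \<B>"
      and c: "hyp_plus n (skip_index m i) (skip_index m j) c \<in> \<B>"
      using has_minus_plus[OF skip_index_less[OF \<open>m < n\<close> ij(1)]
          skip_index_less[OF \<open>m < n\<close> ij(2)] skip_index_inj[OF ij(3)]] by blast
    have minus_eq: "?pb (hyp_minus n (skip_index m i) (skip_index m j) b) = hyp_minus (n - 1) i j b"
      and plus_eq: "?pb (hyp_plus n (skip_index m i) (skip_index m j) c) = hyp_plus (n - 1) i j c"
      using graph_pullback_hyp_minus[OF \<open>m < n\<close> skip_index_neq[of m i] skip_index_neq[of m j]]
        graph_pullback_hyp_plus[OF \<open>m < n\<close> skip_index_neq[of m i] skip_index_neq[of m j]]
      by simp_all
    show "(\<exists>b. hyp_minus (n - 1) i j b \<in> R) \<and> (\<exists>c. hyp_plus (n - 1) i j c \<in> R)"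
      using pullback_mem[OF b minus_eq B_hyperplane_minus[OF ij]]
        pullback_mem[OF c plus_eq B_hyperplane_plus[OF ij]] by blast
  qed
  ultimately show ?thesis
    unfolding del_coord_image_restriction_graph_hyp[OF \<open>m < n\<close>] B_deformation_iff R_def[symmetric]
    by blast
qed

lemma restriction_hyp_coord_B_deformation:
  assumes B: "B_deformation n \<B>" and "k < n"
  shows "B_deformation (n - 1) ((`) (del_coord k) ` restriction \<B> (hyp_coord n k a))"
proof -
  let ?pb = "graph_pullback n k (\<lambda>_. a)"
  have eq_graph_hyp: "hyp_coord n k a = graph_hyp n k (\<lambda>_. a)"
    by (simp add: hyp_coord_def graph_hyp_def)
  have "B_deformation (n - 1) ((`) (del_coord k) ` restriction \<B> (graph_hyp n k (\<lambda>_. a)))"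
  proof (rule restriction_graph_hyp_B_deformation[OF B \<open>k < n\<close>])
    fix c assume "hyp_coord n k c \<noteq> graph_hyp n k (\<lambda>_. a)" and "?pb (hyp_coord n k c) \<noteq> {}"
    moreover have "?pb (hyp_coord n k c) = {y \<in> rspace (n - 1). a = c}"
      using \<open>k < n\<close> by (auto simp: graph_pullback_def hyp_coord_def insert_coord_rspace)
    ultimately show "B_hyperplane (n - 1) (?pb (hyp_coord n k c))"
      using eq_graph_hyp by auto
  next
    fix i b assume i: "i < n" "i \<noteq> k"
    have "?pb (hyp_minus n i k b) = hyp_coord (n - 1) (del_index k i) (a + b)"
      using \<open>k < n\<close> i
      by (auto simp: graph_pullback_def hyp_coord_def hyp_minus_def insert_coord_rspace insert_coord_other)
    then show "B_hyperplane (n - 1) (?pb (hyp_minus n i k b))"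
      using B_hyperplane_coord del_index_less[OF \<open>k < n\<close> i] by simp
  next
    fix i c assume i: "i < n" "i \<noteq> k"
    have "?pb (hyp_plus n i k c) = hyp_coord (n - 1) (del_index k i) (c - a)"
      using \<open>k < n\<close> i
      by (auto simp: graph_pullback_def hyp_coord_def hyp_plus_def insert_coord_rspace insert_coord_other)
    then show "B_hyperplane (n - 1) (?pb (hyp_plus n i k c))"
      using B_hyperplane_coord del_index_less[OF \<open>k < n\<close> i] by simp
  qed
  then show ?thesis by (simp only: eq_graph_hyp)
qed

lemma restriction_hyp_minus_B_deformation:
  assumes B: "B_deformation n \<B>" and "k < l" and "l < n"
  shows "B_deformation (n - 1) ((`) (del_coord l) ` restriction \<B> (hyp_minus n k l a))"
proof -
  let ?g = "\<lambda>y. y k - a"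
  let ?pb = "graph_pullback n l ?g"
  have eq_graph_hyp: "hyp_minus n k l a = graph_hyp n l ?g"
    using \<open>k < l\<close> by (auto simp: hyp_minus_def graph_hyp_def del_coord_def)
  have "k < n - 1" using \<open>k < l\<close> \<open>l < n\<close> by simp
  have "B_deformation (n - 1) ((`) (del_coord l) ` restriction \<B> (graph_hyp n l ?g))"
  proof (rule restriction_graph_hyp_B_deformation[OF B \<open>l < n\<close>])
    fix c
    have "?pb (hyp_coord n l c) = hyp_coord (n - 1) k (c + a)"
      using \<open>l < n\<close> by (auto simp: graph_pullback_def hyp_coord_def insert_coord_rspace)
    then show "B_hyperplane (n - 1) (?pb (hyp_coord n l c))"
      using B_hyperplane_coord \<open>k < n - 1\<close> by simp
  next
    fix i b assume i: "i < n" "i \<noteq> l" and "hyp_minus n i l b \<noteq> graph_hyp n l ?g"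
      and "?pb (hyp_minus n i l b) \<noteq> {}"
    show "B_hyperplane (n - 1) (?pb (hyp_minus n i l b))"
    proof (cases "i = k")
      case True
      have "?pb (hyp_minus n i l b) = {y \<in> rspace (n - 1). a = b}"
        using \<open>l < n\<close> \<open>k < l\<close> True by (auto simp: graph_pullback_def hyp_minus_def insert_coord_rspace)
      with True show ?thesis
        using \<open>hyp_minus n i l b \<noteq> graph_hyp n l ?g\<close> \<open>?pb (hyp_minus n i l b) \<noteq> {}\<close> eq_graph_hyp by auto
    next
      case False
      have "?pb (hyp_minus n i l b) = hyp_minus (n - 1) (del_index l i) k (b - a)"
        using \<open>l < n\<close> \<open>k < l\<close> i
        by (auto simp: graph_pullback_def hyp_minus_def insert_coord_rspace insert_coord_other)
      then show ?thesis
        using B_hyperplane_minus del_index_less[OF \<open>l < n\<close> i] \<open>k < n - 1\<close>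
          del_index_neq_below[OF \<open>k < l\<close> \<open>i \<noteq> l\<close> False] by simp
    qed
  next
    fix i c assume i: "i < n" "i \<noteq> l"
    show "B_hyperplane (n - 1) (?pb (hyp_plus n i l c))"
    proof (cases "i = k")
      case True
      have "?pb (hyp_plus n i l c) = hyp_coord (n - 1) k ((a + c) / 2)"
        using \<open>l < n\<close> \<open>k < l\<close> True
        by (auto simp: graph_pullback_def hyp_plus_def hyp_coord_def insert_coord_rspace)
      then show ?thesis
        using B_hyperplane_coord \<open>k < n - 1\<close> by simp
    next
      case False
      have "?pb (hyp_plus n i l c) = hyp_plus (n - 1) (del_index l i) k (c + a)"
        using \<open>l < n\<close> \<open>k < l\<close> i
        by (auto simp: graph_pullback_def hyp_plus_def insert_coord_rspace insert_coord_other)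
      then show ?thesis
        using B_hyperplane_plus del_index_less[OF \<open>l < n\<close> i] \<open>k < n - 1\<close>
          del_index_neq_below[OF \<open>k < l\<close> \<open>i \<noteq> l\<close> False] by simp
    qed
  qed
  then show ?thesis by (simp only: eq_graph_hyp)
qed

lemma restriction_hyp_plus_B_deformation:
  assumes B: "B_deformation n \<B>" and "k < l" and "l < n"
  shows "B_deformation (n - 1) ((`) (del_coord l) ` restriction \<B> (hyp_plus n k l a))"
proof -
  let ?g = "\<lambda>y. a - y k"
  let ?pb = "graph_pullback n l ?g"
  have eq_graph_hyp: "hyp_plus n k l a = graph_hyp n l ?g"
    using \<open>k < l\<close> by (auto simp: hyp_plus_def graph_hyp_def del_coord_def)
  have "k < n - 1" using \<open>k < l\<close> \<open>l < n\<close> by simp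
  have "B_deformation (n - 1) ((`) (del_coord l) ` restriction \<B> (graph_hyp n l ?g))"
  proof (rule restriction_graph_hyp_B_deformation[OF B \<open>l < n\<close>])
    fix c
    have "?pb (hyp_coord n l c) = hyp_coord (n - 1) k (a - c)"
      using \<open>l < n\<close> by (auto simp: graph_pullback_def hyp_coord_def insert_coord_rspace)
    then show "B_hyperplane (n - 1) (?pb (hyp_coord n l c))"
      using B_hyperplane_coord \<open>k < n - 1\<close> by simp
  next
    fix i b assume i: "i < n" "i \<noteq> l"
    show "B_hyperplane (n - 1) (?pb (hyp_minus n i l b))"
    proof (cases "i = k")
      case True
      have "?pb (hyp_minus n i l b) = hyp_coord (n - 1) k ((a + b) / 2)"
        using \<open>l < n\<close> \<open>k < l\<close> True
        by (auto simp: graph_pullback_def hyp_minus_def hyp_coord_def insert_coord_rspace)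
      then show ?thesis
        using B_hyperplane_coord \<open>k < n - 1\<close> by simp
    next
      case False
      have "?pb (hyp_minus n i l b) = hyp_plus (n - 1) (del_index l i) k (b + a)"
        using \<open>l < n\<close> \<open>k < l\<close> i
        by (auto simp: graph_pullback_def hyp_minus_def hyp_plus_def insert_coord_rspace insert_coord_other)
      then show ?thesis
        using B_hyperplane_plus del_index_less[OF \<open>l < n\<close> i] \<open>k < n - 1\<close>
          del_index_neq_below[OF \<open>k < l\<close> \<open>i \<noteq> l\<close> False] by simp
    qed
  next
    fix i c assume i: "i < n" "i \<noteq> l" and "hyp_plus n i l c \<noteq> graph_hyp n l ?g"
      and "?pb (hyp_plus n i l c) \<noteq> {}"
    show "B_hyperplane (n - 1) (?pb (hyp_plus n i l c))"
    proof (cases "i = k")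
      case True
      have "?pb (hyp_plus n i l c) = {y \<in> rspace (n - 1). a = c}"
        using \<open>l < n\<close> \<open>k < l\<close> True by (auto simp: graph_pullback_def hyp_plus_def insert_coord_rspace)
      with True show ?thesis
        using \<open>hyp_plus n i l c \<noteq> graph_hyp n l ?g\<close> \<open>?pb (hyp_plus n i l c) \<noteq> {}\<close> eq_graph_hyp by auto
    next
      case False
      have "?pb (hyp_plus n i l c) = hyp_minus (n - 1) (del_index l i) k (c - a)"
        using \<open>l < n\<close> \<open>k < l\<close> i
        by (auto simp: graph_pullback_def hyp_minus_def hyp_plus_def insert_coord_rspace insert_coord_other)
      then show ?thesis
        using B_hyperplane_minus del_index_less[OF \<open>l < n\<close> i] \<open>k < n - 1\<close>
          del_index_neq_below[OF \<open>k < l\<close> \<open>i \<noteq> l\<close> False] by simp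
    qed
  qed
  then show ?thesis by (simp only: eq_graph_hyp)
qed

theorem lemma3p2:
  fixes n :: nat and \<B> :: "(nat \<Rightarrow> real) set set" and H0 :: "(nat \<Rightarrow> real) set"
  assumes "2 \<le> n" and "B_deformation n \<B>" and "H0 \<in> \<B>"
  shows "(\<forall>k a. k < n \<and> H0 = hyp_coord n k a \<longrightarrow>
            B_deformation (n - 1) ((`) (del_coord k) ` restriction \<B> H0))
       \<and> (\<forall>k l a. k < l \<and> l < n \<and> H0 = hyp_minus n k l a \<longrightarrow>
            B_deformation (n - 1) ((`) (del_coord l) ` restriction \<B> H0))
       \<and> (\<forall>k l a. k < l \<and> l < n \<and> H0 = hyp_plus n k l a \<longrightarrow>
            B_deformation (n - 1) ((`) (del_coord l) ` restriction \<B> H0))"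
proof (intro conjI allI impI; elim conjE)
  show "B_deformation (n - 1) ((`) (del_coord k) ` restriction \<B> H0)"
    if "k < n" and "H0 = hyp_coord n k a" for k a
    unfolding that(2) by (rule restriction_hyp_coord_B_deformation[OF assms(2) that(1)])
  show "B_deformation (n - 1) ((`) (del_coord l) ` restriction \<B> H0)"
    if "k < l" and "l < n" and "H0 = hyp_minus n k l a" for k l a
    unfolding that(3) by (rule restriction_hyp_minus_B_deformation[OF assms(2) that(1,2)])
  show "B_deformation (n - 1) ((`) (del_coord l) ` restriction \<B> H0)"
    if "k < l" and "l < n" and "H0 = hyp_plus n k l a" for k l a
    unfolding that(3) by (rule restriction_hyp_plus_B_deformation[OF assms(2) that(1,2)])
qed

end
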